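(* Let $G=([n],E)$ be a persistent graph and let $S\in\Xi(G)$ be a 3-simplex containing vertices $a<b<c$ such that $\{a,b,c\}\notin F_2(C)$, where $C=C(n+2,3)$. Then there exists another 3-simplex $S'\in\Xi(G)$, $S'\neq S$, with $\{a,b,c\}\subset S'$.
   Context: The cyclic polytope $C=C(n+2,3)$ has vertices $0,1,\dots,n+1$ (ordered along the moment curve $t\mapsto(t,t^2,t^3)$), and its 2-faces (as vertex sets) are $F_2(C)=\{\{0,i,i+1\},\{i-1,i,n+1\}: 0<i<n+1\}$. A graph $G=([n],E)$ is persistent if (1) $\{i,i+1\}\in E$ for all $1\le i<n$; (2) (X-property) if $\{a,c\},\{b,d\}\in E$ for $a<b<c<d$ then $\{a,d\}\in E$; (3) (bar-property) for every edge $\{a,b\}\in E$ with $a<b-1$ there is $x$ with $a<x<b$ and $\{a,x\},\{x,b\}\in E$. $\hat G$ is the graph on $\{0,\dots,n+1\}$ with edge set $E$ together with all pairs containing $0$ or $n+1$. For an edge $e=\{v,w\}\in E$ with $v<w$, $\ell_G(e)=\max\{i : i<v,\ \{i,w\}\in E(\hat G)\}$, $r_G(e)=\min\{i : w<i,\ \{i,v\}\in E(\hat G)\}$, $\xi_G(e)=\{\ell_G(e),v,w,r_G(e)\}$, and $\Xi(G)=\{\xi_G(e): e\in E\}$. *)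

theory Defs
  imports Main
begin

definition cyclic_faces2 :: "nat \<Rightarrow> nat set set" where
  "cyclic_faces2 n = {{0, i, i + 1} | i. 0 < i \<and> i < n + 1}
                   \<union> {{i - 1, i, n + 1} | i. 0 < i \<and> i < n + 1}"

definition is_graph :: "nat \<Rightarrow> nat set set \<Rightarrow> bool" where
  "is_graph n E \<longleftrightarrow> (\<forall>e\<in>E. \<exists>u v. e = {u, v} \<and> u \<noteq> v \<and> u \<in> {1..n} \<and> v \<in> {1..n})"

definition persistent :: "nat \<Rightarrow> nat set set \<Rightarrow> bool" where
  "persistent n E \<longleftrightarrow> is_graph n E
     \<and> (\<forall>i. 1 \<le> i \<and> i < n \<longrightarrow> {i, i + 1} \<in> E)
     \<and> (\<forall>a b c d. a < b \<and> b < c \<and> c < d \<and> {a, c} \<in> E \<and> {b, d} \<in> E \<longrightarrow> {a, d} \<in> E)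
     \<and> (\<forall>a b. {a, b} \<in> E \<and> a + 1 < b \<longrightarrow> (\<exists>x. a < x \<and> x < b \<and> {a, x} \<in> E \<and> {x, b} \<in> E))"

definition hat_edges :: "nat \<Rightarrow> nat set set \<Rightarrow> nat set set" where
  "hat_edges n E = E \<union> {{u, v} | u v. u \<noteq> v \<and> u \<le> n + 1 \<and> v \<le> n + 1
                                     \<and> (u = 0 \<or> u = n + 1)}"

definition ellG :: "nat \<Rightarrow> nat set set \<Rightarrow> nat \<Rightarrow> nat \<Rightarrow> nat" where
  "ellG n E v w = Max {i. i < v \<and> {i, w} \<in> hat_edges n E}"

definition rG :: "nat \<Rightarrow> nat set set \<Rightarrow> nat \<Rightarrow> nat \<Rightarrow> nat" where
  "rG n E v w = Min {i. w < i \<and> {i, v} \<in> hat_edges n E}"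

definition xiG :: "nat \<Rightarrow> nat set set \<Rightarrow> nat \<Rightarrow> nat \<Rightarrow> nat set" where
  "xiG n E v w = {ellG n E v w, v, w, rG n E v w}"

definition Xi :: "nat \<Rightarrow> nat set set \<Rightarrow> nat set set" where
  "Xi n E = {xiG n E v w | v w. v < w \<and> {v, w} \<in> E}"

end

theory Submission
  imports Defs
begin

text \<open>
  Write S = \<xi>(e) = {l, v, w, r} for the edge e = {v, w}. The hat graph, in which 0 and n + 1 are
  joined to everything, again has the X- and bar-properties, and l and r are the nearest hat-neighbours
  of w below v and of v above w. Using the bar property repeatedly, no hat-edge can jump from (l, v)
  over v and w into (w, r). The triangle {a, b, c} is one of the four faces of S. For each face, an
  extremal neighbour of one of its vertices followed by the bar property yields an edge e' such that
  \<xi>(e') contains the face and a vertex outside S. The construction breaks down only when the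
  face is {0, i, i + 1} or {i - 1, i, n + 1}, a boundary face of C(n + 2, 3).
\<close>

lemma sorted_triple_in_quadruple:
  fixes l v w r a b c :: nat
  assumes "l < v" "v < w" "w < r" "a < b" "b < c" "{a, b, c} \<subseteq> {l, v, w, r}"
  shows "{a, b, c} = {v, w, r} \<or> {a, b, c} = {l, w, r} \<or> {a, b, c} = {l, v, r} \<or> {a, b, c} = {l, v, w}"
proof -
  have "a \<in> {l, v, w, r}" "b \<in> {l, v, w, r}" "c \<in> {l, v, w, r}" using assms(6) by auto
  then show ?thesis using assms(1-5) by (elim insertE; simp; linarith)
qed

lemma nat_least_above:
  fixes a k :: nat
  assumes "a < k" "P k"
  obtains x where "a < x" "x \<le> k" "P x" "\<And>j. a < j \<Longrightarrow> j < x \<Longrightarrow> \<not> P j"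
proof
  let ?x = "LEAST j. a < j \<and> P j"
  show "a < ?x" "P ?x" using LeastI[of "\<lambda>j. a < j \<and> P j"] assms by blast+
  show "?x \<le> k" using Least_le[of "\<lambda>j. a < j \<and> P j"] assms by blast
  show "\<not> P j" if "a < j" "j < ?x" for j using not_less_Least[of j] that by blast
qed

lemma nat_greatest_below:
  fixes k b :: nat
  assumes "k < b" "P k"
  obtains x where "k \<le> x" "x < b" "P x" "\<And>j. x < j \<Longrightarrow> j < b \<Longrightarrow> \<not> P j"
proof
  let ?Q = "\<lambda>j. k \<le> j \<and> j < b \<and> P j"
  have "?Q k" and bound: "\<And>y. ?Q y \<Longrightarrow> y \<le> b" using assms by auto
  then show "k \<le> Greatest ?Q" "Greatest ?Q < b" "P (Greatest ?Q)"
    using GreatestI_nat[of ?Q k b] by blast+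
  show "\<not> P j" if "Greatest ?Q < j" "j < b" for j
    using Greatest_le_nat[of ?Q j b] bound that \<open>k \<le> Greatest ?Q\<close> by fastforce
qed

section \<open>Persistent graphs and their hat graphs\<close>

lemma is_graph_edgeD:
  assumes "is_graph n E" "{a, b} \<in> E"
  shows "a \<noteq> b" "a \<in> {1..n}" "b \<in> {1..n}"
  using assms unfolding is_graph_def by (auto simp: doubleton_eq_iff)

lemma persistent_is_graph: "persistent n E \<Longrightarrow> is_graph n E"
  unfolding persistent_def by blast

lemma persistent_path_edge: "persistent n E \<Longrightarrow> 1 \<le> i \<Longrightarrow> i < n \<Longrightarrow> {i, i + 1} \<in> E"
  unfolding persistent_def by blast

lemma persistent_crossing:
  "persistent n E \<Longrightarrow> a < b \<Longrightarrow> b < c \<Longrightarrow> c < d \<Longrightarrow> {a, c} \<in> E \<Longrightarrow> {b, d} \<in> E \<Longrightarrow> {a, d} \<in> E"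
  unfolding persistent_def by blast

lemma persistent_midpoint:
  "persistent n E \<Longrightarrow> {a, b} \<in> E \<Longrightarrow> a + 1 < b \<Longrightarrow> \<exists>x. a < x \<and> x < b \<and> {a, x} \<in> E \<and> {x, b} \<in> E"
  unfolding persistent_def by blast

lemma hat_edges_iff:
  assumes "i < j"
  shows "{i, j} \<in> hat_edges n E \<longleftrightarrow> {i, j} \<in> E \<or> (i = 0 \<and> j \<le> n + 1) \<or> j = n + 1"
proof
  assume "{i, j} \<in> hat_edges n E"
  then show "{i, j} \<in> E \<or> (i = 0 \<and> j \<le> n + 1) \<or> j = n + 1"
    using assms unfolding hat_edges_def by (auto simp: doubleton_eq_iff)
next
  assume "{i, j} \<in> E \<or> (i = 0 \<and> j \<le> n + 1) \<or> j = n + 1"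
  then show "{i, j} \<in> hat_edges n E"
  proof (elim disjE)
    assume "j = n + 1"
    then have "{i, j} = {j, i}" "i \<le> n + 1" using assms by (auto simp: insert_commute)
    then show ?thesis unfolding hat_edges_def using assms \<open>j = n + 1\<close> by blast
  qed (use assms in \<open>auto simp: hat_edges_def\<close>)
qed

lemma hat_edges_if_edge: "e \<in> E \<Longrightarrow> e \<in> hat_edges n E"
  unfolding hat_edges_def by blast

lemma hat_edges_inner: "1 \<le> i \<Longrightarrow> i < j \<Longrightarrow> j \<le> n \<Longrightarrow> {i, j} \<in> hat_edges n E \<longleftrightarrow> {i, j} \<in> E"
  by (simp add: hat_edges_iff)

lemma hat_edges_vertex_le:
  assumes "is_graph n E" "{i, j} \<in> hat_edges n E"
  shows "i \<le> n + 1"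
  using assms is_graph_edgeD[OF assms(1), of i j] unfolding hat_edges_def
  by (auto simp: doubleton_eq_iff)

lemma hat_edges_crossing:
  assumes P: "persistent n E" and "a < b" "b < c" "c < d"
    and ac: "{a, c} \<in> hat_edges n E" and bd: "{b, d} \<in> hat_edges n E"
  shows "{a, d} \<in> hat_edges n E"
proof -
  have "d \<le> n + 1"
    using hat_edges_vertex_le[OF persistent_is_graph[OF P], of d b] bd by (simp add: insert_commute)
  moreover have "{a, d} \<in> E" if "1 \<le> a" "d \<le> n"
  proof (rule persistent_crossing[OF P \<open>a < b\<close> \<open>b < c\<close> \<open>c < d\<close>])
    show "{a, c} \<in> E" "{b, d} \<in> E"
      using that assms hat_edges_inner[of a c n E] hat_edges_inner[of b d n E] by auto
  qed
  ultimately show ?thesis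
    using assms by (cases "a = 0 \<or> d = n + 1") (auto simp: hat_edges_iff)
qed

lemma hat_edges_midpoint:
  assumes P: "persistent n E" and ab: "{a, b} \<in> hat_edges n E" and "a + 1 < b"
  shows "\<exists>x. a < x \<and> x < b \<and> {a, x} \<in> hat_edges n E \<and> {x, b} \<in> hat_edges n E"
proof -
  have b: "b \<le> n + 1"
    using hat_edges_vertex_le[OF persistent_is_graph[OF P], of b a] ab by (simp add: insert_commute)
  consider "a = 0" | "b = n + 1" | "1 \<le> a" "b \<le> n" using b by linarith
  then show ?thesis
  proof cases
    case 1
    have "{b - 1, b} \<in> hat_edges n E"
      using persistent_path_edge[OF P, of "b - 1"] \<open>a + 1 < b\<close> b by (auto simp: hat_edges_iff)
    then show ?thesis using 1 b \<open>a + 1 < b\<close> by (intro exI[of _ "b - 1"]) (auto simp: hat_edges_iff)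
  next
    case 2
    have "{a, a + 1} \<in> hat_edges n E"
      using persistent_path_edge[OF P, of a] \<open>a + 1 < b\<close> 2 by (auto simp: hat_edges_iff)
    then show ?thesis using 2 \<open>a + 1 < b\<close> by (intro exI[of _ "a + 1"]) (auto simp: hat_edges_iff)
  next
    case 3
    then have "{a, b} \<in> E" using ab \<open>a + 1 < b\<close> by (simp add: hat_edges_inner)
    then obtain x where "a < x" "x < b" "{a, x} \<in> E" "{x, b} \<in> E"
      using persistent_midpoint[OF P _ \<open>a + 1 < b\<close>] by blast
    then show ?thesis by (auto simp: hat_edges_def)
  qed
qed

section \<open>The outer neighbours of an edge\<close>

lemma ellG_eqI:
  assumes "x < v" "{x, w} \<in> hat_edges n E" "\<And>i. x < i \<Longrightarrow> i < v \<Longrightarrow> {i, w} \<notin> hat_edges n E"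
  shows "ellG n E v w = x"
  unfolding ellG_def using assms by (intro Max_eqI) (auto simp: not_less[symmetric])

lemma rG_eqI:
  assumes "is_graph n E" "w < y" "{v, y} \<in> hat_edges n E"
    "\<And>i. w < i \<Longrightarrow> i < y \<Longrightarrow> {v, i} \<notin> hat_edges n E"
  shows "rG n E v w = y"
  unfolding rG_def
proof (rule Min_eqI)
  show "finite {i. w < i \<and> {i, v} \<in> hat_edges n E}"
    by (rule finite_subset[of _ "{..n + 1}"]) (auto dest: hat_edges_vertex_le[OF assms(1)])
qed (use assms in \<open>auto simp: insert_commute not_less[symmetric]\<close>)

lemma ellG_spec:
  assumes "0 < v" "v < w" "w \<le> n + 1"
  shows ellG_less: "ellG n E v w < v"
    and ellG_hat_edge: "{ellG n E v w, w} \<in> hat_edges n E"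
    and ellG_gap: "ellG n E v w < i \<Longrightarrow> i < v \<Longrightarrow> {i, w} \<notin> hat_edges n E"
proof -
  let ?A = "{i. i < v \<and> {i, w} \<in> hat_edges n E}"
  have fin: "finite ?A" by (rule finite_subset[of _ "{..<v}"]) auto
  have "0 \<in> ?A" using assms by (simp add: hat_edges_iff)
  then have "Max ?A \<in> ?A" using Max_in[OF fin] by blast
  moreover have "\<And>i. i \<in> ?A \<Longrightarrow> i \<le> Max ?A" using Max_ge[OF fin] .
  ultimately show "ellG n E v w < v" "{ellG n E v w, w} \<in> hat_edges n E"
    "ellG n E v w < i \<Longrightarrow> i < v \<Longrightarrow> {i, w} \<notin> hat_edges n E"
    unfolding ellG_def by fastforce+
qed

lemma rG_spec:
  assumes "is_graph n E" "v < w" "w \<le> n"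
  shows rG_greater: "w < rG n E v w"
    and rG_le: "rG n E v w \<le> n + 1"
    and rG_hat_edge: "{v, rG n E v w} \<in> hat_edges n E"
    and rG_gap: "w < i \<Longrightarrow> i < rG n E v w \<Longrightarrow> {v, i} \<notin> hat_edges n E"
proof -
  let ?A = "{i. w < i \<and> {i, v} \<in> hat_edges n E}"
  have fin: "finite ?A"
    by (rule finite_subset[of _ "{..n + 1}"]) (auto dest: hat_edges_vertex_le[OF assms(1)])
  have A: "n + 1 \<in> ?A" using assms by (simp add: hat_edges_iff insert_commute)
  then have "Min ?A \<in> ?A" using Min_in[OF fin] by blast
  moreover have "\<And>i. i \<in> ?A \<Longrightarrow> Min ?A \<le> i" using Min_le[OF fin] .
  moreover note A
  ultimately show "w < rG n E v w" "rG n E v w \<le> n + 1" "{v, rG n E v w} \<in> hat_edges n E"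
    "w < i \<Longrightarrow> i < rG n E v w \<Longrightarrow> {v, i} \<notin> hat_edges n E"
    unfolding rG_def by (fastforce simp: insert_commute)+
qed

lemma xiG_in_Xi: "v < w \<Longrightarrow> {v, w} \<in> E \<Longrightarrow> xiG n E v w \<in> Xi n E"
  unfolding Xi_def by blast

section \<open>Faces of the simplex of an edge\<close>

locale persistent_edge =
  fixes n :: nat and E :: "nat set set" and v w :: nat
  assumes persistent: "persistent n E" and v_less_w: "v < w" and edge: "{v, w} \<in> E"
begin

abbreviation "L \<equiv> ellG n E v w"
abbreviation "R \<equiv> rG n E v w"

lemma graph: "is_graph n E"
  using persistent by (rule persistent_is_graph)

lemma v_ge: "1 \<le> v" and w_le: "w \<le> n"
  using is_graph_edgeD[OF graph edge] by auto

lemma L_less: "L < v"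
  and L_hat_edge: "{L, w} \<in> hat_edges n E"
  and L_gap: "L < i \<Longrightarrow> i < v \<Longrightarrow> {i, w} \<notin> hat_edges n E"
  using ellG_less ellG_hat_edge ellG_gap v_ge v_less_w w_le by auto

lemma R_greater: "w < R"
  and R_le: "R \<le> n + 1"
  and R_hat_edge: "{v, R} \<in> hat_edges n E"
  and R_gap: "w < i \<Longrightarrow> i < R \<Longrightarrow> {v, i} \<notin> hat_edges n E"
  using rG_greater[OF graph] rG_le[OF graph] rG_hat_edge[OF graph] rG_gap[OF graph] v_less_w w_le by auto

lemma L_R_hat_edge: "{L, R} \<in> hat_edges n E"
  using hat_edges_crossing[OF persistent L_less v_less_w R_greater L_hat_edge R_hat_edge] .

lemma no_hat_edge_over_vw:
  "L < i \<Longrightarrow> i < v \<Longrightarrow> w < x \<Longrightarrow> x < R \<Longrightarrow> {i, x} \<notin> hat_edges n E"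
proof (induction "x - i" arbitrary: i x rule: less_induct)
  case less
  show ?case
  proof
    assume ix: "{i, x} \<in> hat_edges n E"
    have "i + 1 < x" using less.prems v_less_w by linarith
    then obtain y where y: "i < y" "y < x" "{i, y} \<in> hat_edges n E" "{y, x} \<in> hat_edges n E"
      using hat_edges_midpoint[OF persistent ix] by blast
    consider "y < v" | "y = v" | "v < y" "y < w" | "y = w" | "w < y" by linarith
    then show False
    proof cases
      case 1
      have "x - y < x - i" using y by linarith
      then show False using less.hyps[of x y] less.prems y 1 by auto
    next
      case 2 then show False using R_gap less.prems y by auto
    next
      case 3
      then have "{v, x} \<in> hat_edges n E"
        using hat_edges_crossing[OF persistent _ _ _ hat_edges_if_edge[OF edge] y(4)] less.prems by auto
      then show False using R_gap less.prems by auto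
    next
      case 4 then show False using L_gap less.prems y by auto
    next
      case 5
      have "y - i < x - i" using y by linarith
      then show False using less.hyps[of y i] less.prems y 5 by auto
    qed
  qed
qed

lemma no_hat_edge_over_w:
  assumes "L < i" "i < w" "w < x" "x < R"
  shows "{i, x} \<notin> hat_edges n E"
proof
  assume ix: "{i, x} \<in> hat_edges n E"
  consider "i < v" | "i = v" | "v < i" by linarith
  then show False
  proof cases
    case 3
    then have "{v, x} \<in> hat_edges n E"
      using hat_edges_crossing[OF persistent _ _ _ hat_edges_if_edge[OF edge] ix] assms by auto
    then show False using R_gap assms by auto
  qed (use ix assms no_hat_edge_over_vw R_gap in auto)
qed

lemma no_hat_edge_over_v:
  assumes "L < i" "i < v" "v < x" "x < R"
  shows "{i, x} \<notin> hat_edges n E"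
proof
  assume ix: "{i, x} \<in> hat_edges n E"
  consider "x < w" | "x = w" | "w < x" by linarith
  then show False
  proof cases
    case 1
    then have "{i, w} \<in> hat_edges n E"
      using hat_edges_crossing[OF persistent _ _ _ ix hat_edges_if_edge[OF edge]] assms by auto
    then show False using L_gap assms by auto
  qed (use ix assms no_hat_edge_over_vw L_gap in auto)
qed

lemma last_R_neighbour:
  obtains m where "v \<le> m" "m < w" "{m, R} \<in> hat_edges n E"
    "\<And>j. m < j \<Longrightarrow> j < w \<Longrightarrow> {j, R} \<notin> hat_edges n E"
    "{m, w} \<in> hat_edges n E" "{w, R} \<in> hat_edges n E"
proof -
  obtain m where m: "v \<le> m" "m < w" "{m, R} \<in> hat_edges n E"
    and m_max: "\<And>j. m < j \<Longrightarrow> j < w \<Longrightarrow> {j, R} \<notin> hat_edges n E"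
    using nat_greatest_below[of v w "\<lambda>j. {j, R} \<in> hat_edges n E"] v_less_w R_hat_edge by blast
  have "m + 1 < R" using m R_greater by linarith
  then obtain z where z: "m < z" "z < R" "{m, z} \<in> hat_edges n E" "{z, R} \<in> hat_edges n E"
    using hat_edges_midpoint[OF persistent m(3)] by blast
  have "z = w"
  proof (rule ccontr)
    assume "z \<noteq> w"
    then consider "z < w" | "w < z" by linarith
    then show False
      by cases (use m_max z m L_less no_hat_edge_over_w[of m z] in auto)
  qed
  then show thesis using that m m_max z by blast
qed

lemma first_L_neighbour:
  obtains m where "v < m" "m \<le> w" "{L, m} \<in> hat_edges n E"
    "\<And>j. v < j \<Longrightarrow> j < m \<Longrightarrow> {L, j} \<notin> hat_edges n E"
    "{L, v} \<in> hat_edges n E" "{v, m} \<in> hat_edges n E"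
proof -
  obtain m where m: "v < m" "m \<le> w" "{L, m} \<in> hat_edges n E"
    and m_min: "\<And>j. v < j \<Longrightarrow> j < m \<Longrightarrow> {L, j} \<notin> hat_edges n E"
    using nat_least_above[of v w "\<lambda>j. {L, j} \<in> hat_edges n E"] v_less_w L_hat_edge by blast
  have "L + 1 < m" using m L_less by linarith
  then obtain z where z: "L < z" "z < m" "{L, z} \<in> hat_edges n E" "{z, m} \<in> hat_edges n E"
    using hat_edges_midpoint[OF persistent m(3)] by blast
  have "z = v"
  proof (rule ccontr)
    assume "z \<noteq> v"
    then consider "z < v" | "v < z" by linarith
    then show False
      by cases (use m_min z m R_greater no_hat_edge_over_v[of z m] in auto)
  qed
  then show thesis using that m m_min z by blast
qed

lemma w_R_hat_edge: "{w, R} \<in> hat_edges n E"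
  by (rule last_R_neighbour) blast

lemma L_v_hat_edge: "{L, v} \<in> hat_edges n E"
  by (rule first_L_neighbour) blast

lemma first_L_neighbour_above_w:
  obtains m where "w < m" "m \<le> R" "{L, m} \<in> hat_edges n E"
    "\<And>j. w < j \<Longrightarrow> j < m \<Longrightarrow> {L, j} \<notin> hat_edges n E"
    "m < R \<Longrightarrow> {w, m} \<in> hat_edges n E"
proof -
  obtain m where m: "w < m" "m \<le> R" "{L, m} \<in> hat_edges n E"
    and m_min: "\<And>j. w < j \<Longrightarrow> j < m \<Longrightarrow> {L, j} \<notin> hat_edges n E"
    using nat_least_above[of w R "\<lambda>j. {L, j} \<in> hat_edges n E"] R_greater L_R_hat_edge by blast
  have "{w, m} \<in> hat_edges n E" if "m < R"
  proof -
    have "L + 1 < m" using m L_less v_less_w by linarith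
    then obtain z where z: "L < z" "z < m" "{L, z} \<in> hat_edges n E" "{z, m} \<in> hat_edges n E"
      using hat_edges_midpoint[OF persistent m(3)] by blast
    have "z = w"
    proof (rule ccontr)
      assume "z \<noteq> w"
      then consider "z < w" | "w < z" by linarith
      then show False
        by cases (use m_min z m \<open>m < R\<close> no_hat_edge_over_w[of z m] in auto)
    qed
    then show ?thesis using z by simp
  qed
  then show thesis using that m m_min by blast
qed

lemma last_R_neighbour_below_v:
  obtains m where "L \<le> m" "m < v" "{m, R} \<in> hat_edges n E"
    "\<And>j. m < j \<Longrightarrow> j < v \<Longrightarrow> {j, R} \<notin> hat_edges n E"
    "L < m \<Longrightarrow> {m, v} \<in> hat_edges n E"
proof -
  obtain m where m: "L \<le> m" "m < v" "{m, R} \<in> hat_edges n E"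
    and m_max: "\<And>j. m < j \<Longrightarrow> j < v \<Longrightarrow> {j, R} \<notin> hat_edges n E"
    using nat_greatest_below[of L v "\<lambda>j. {j, R} \<in> hat_edges n E"] L_less L_R_hat_edge by blast
  have "{m, v} \<in> hat_edges n E" if "L < m"
  proof -
    have "m + 1 < R" using m v_less_w R_greater by linarith
    then obtain z where z: "m < z" "z < R" "{m, z} \<in> hat_edges n E" "{z, R} \<in> hat_edges n E"
      using hat_edges_midpoint[OF persistent m(3)] by blast
    have "z = v"
    proof (rule ccontr)
      assume "z \<noteq> v"
      then consider "z < v" | "v < z" by linarith
      then show False
        by cases (use m_max z m \<open>L < m\<close> no_hat_edge_over_v[of m z] in auto)
    qed
    then show ?thesis using z by simp
  qed
  then show thesis using that m m_max by blast
qed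

lemma another_simplexI:
  assumes "x < y" "{x, y} \<in> E" "u \<in> xiG n E x y" "u \<notin> {L, v, w, R}" "T \<subseteq> xiG n E x y"
  shows "\<exists>S'\<in>Xi n E. S' \<noteq> {L, v, w, R} \<and> T \<subseteq> S'"
  using xiG_in_Xi[OF assms(1,2)] assms(3-5) by blast

lemma face_vwR_shared_via_wR:
  assumes "R \<le> n" "\<And>j. v < j \<Longrightarrow> j < w \<Longrightarrow> {j, R} \<notin> hat_edges n E"
  shows "\<exists>S'\<in>Xi n E. S' \<noteq> {L, v, w, R} \<and> {v, w, R} \<subseteq> S'"
proof -
  have wR: "{w, R} \<in> E"
    using w_R_hat_edge v_ge v_less_w R_greater assms(1) by (simp add: hat_edges_inner)
  have "ellG n E w R = v"
    using v_less_w R_hat_edge assms(2) by (intro ellG_eqI) auto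
  moreover have "R < rG n E w R" using rG_greater[OF graph R_greater assms(1)] .
  ultimately show ?thesis
    using L_less v_less_w R_greater
    by (intro another_simplexI[OF R_greater wR, of "rG n E w R"]) (auto simp: xiG_def)
qed

lemma face_vwR_shared_via_inner:
  assumes "v < y" "y < w" "{y, w} \<in> hat_edges n E" "{y, R} \<in> hat_edges n E"
  shows "\<exists>S'\<in>Xi n E. S' \<noteq> {L, v, w, R} \<and> {v, w, R} \<subseteq> S'"
proof -
  obtain x where x: "v < x" "x \<le> y" "{x, w} \<in> hat_edges n E"
    and x_min: "\<And>j. v < j \<Longrightarrow> j < x \<Longrightarrow> {j, w} \<notin> hat_edges n E"
    using nat_least_above[of v y "\<lambda>j. {j, w} \<in> hat_edges n E"] assms by blast
  have xR: "{x, R} \<in> hat_edges n E"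
  proof (cases "x = y")
    case False
    then show ?thesis
      using hat_edges_crossing[OF persistent _ _ R_greater x(3) assms(4)] x assms by auto
  qed (use assms in simp)
  have "ellG n E x w = v"
    using x x_min hat_edges_if_edge[OF edge] by (intro ellG_eqI) auto
  moreover have "rG n E x w = R"
    using R_greater xR no_hat_edge_over_w[of x] x assms L_less by (intro rG_eqI[OF graph]) auto
  moreover have "{x, w} \<in> E" using x assms v_ge w_le by (simp add: hat_edges_inner)
  ultimately show ?thesis
    using x assms L_less R_greater by (intro another_simplexI[of x w x]) (auto simp: xiG_def)
qed

lemma shared_face_vwR:
  assumes "{v, w, R} \<notin> cyclic_faces2 n"
  shows "\<exists>S'\<in>Xi n E. S' \<noteq> {L, v, w, R} \<and> {v, w, R} \<subseteq> S'"
proof -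
  obtain m where m: "v \<le> m" "m < w" "{m, R} \<in> hat_edges n E"
    and m_max: "\<And>j. m < j \<Longrightarrow> j < w \<Longrightarrow> {j, R} \<notin> hat_edges n E"
    and mw: "{m, w} \<in> hat_edges n E"
    by (rule last_R_neighbour) blast
  show ?thesis
  proof (cases "m = v")
    case True
    have "R \<le> n"
    proof (rule ccontr)
      assume "\<not> R \<le> n"
      then have R: "R = n + 1" using R_le by linarith
      then have "{w - 1, R} \<in> hat_edges n E" using v_less_w w_le by (simp add: hat_edges_iff)
      then have "\<not> v < w - 1" using m_max[of "w - 1"] True by auto
      then have "{v, w, R} = {w - 1, w, n + 1} \<and> 0 < w \<and> w < n + 1" using R v_less_w w_le by auto
      then have "{v, w, R} \<in> cyclic_faces2 n" unfolding cyclic_faces2_def by blast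
      with assms show False ..
    qed
    then show ?thesis using m_max True by (intro face_vwR_shared_via_wR) auto
  next
    case False
    then show ?thesis using m mw by (intro face_vwR_shared_via_inner[of m]) auto
  qed
qed

lemma face_Lvw_shared_via_Lv:
  assumes "0 < L" "\<And>j. v < j \<Longrightarrow> j < w \<Longrightarrow> {L, j} \<notin> hat_edges n E"
  shows "\<exists>S'\<in>Xi n E. S' \<noteq> {L, v, w, R} \<and> {L, v, w} \<subseteq> S'"
proof -
  have Lv: "{L, v} \<in> E"
    using L_v_hat_edge L_less v_less_w w_le assms(1) by (simp add: hat_edges_inner)
  have "rG n E L v = w"
    using v_less_w L_hat_edge assms(2) by (intro rG_eqI[OF graph]) auto
  moreover have "ellG n E L v < L" using ellG_less[OF assms(1) L_less] v_less_w w_le by simp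
  ultimately show ?thesis
    using L_less v_less_w R_greater
    by (intro another_simplexI[OF L_less Lv, of "ellG n E L v"]) (auto simp: xiG_def)
qed

lemma face_Lvw_shared_via_inner:
  assumes "v < y" "y < w" "{v, y} \<in> hat_edges n E" "{L, y} \<in> hat_edges n E"
  shows "\<exists>S'\<in>Xi n E. S' \<noteq> {L, v, w, R} \<and> {L, v, w} \<subseteq> S'"
proof -
  obtain x where x: "y \<le> x" "x < w" "{v, x} \<in> hat_edges n E"
    and x_max: "\<And>j. x < j \<Longrightarrow> j < w \<Longrightarrow> {v, j} \<notin> hat_edges n E"
    using nat_greatest_below[of y w "\<lambda>j. {v, j} \<in> hat_edges n E"] assms by blast
  have Lx: "{L, x} \<in> hat_edges n E"
  proof (cases "x = y")
    case False
    then show ?thesis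
      using hat_edges_crossing[OF persistent L_less _ _ assms(4) x(3)] x assms by auto
  qed (use assms in simp)
  have "ellG n E v x = L"
    using L_less Lx no_hat_edge_over_v[of _ x] x assms R_greater by (intro ellG_eqI) auto
  moreover have "rG n E v x = w"
    using x x_max hat_edges_if_edge[OF edge] by (intro rG_eqI[OF graph]) auto
  moreover have "{v, x} \<in> E" using x assms v_ge w_le by (simp add: hat_edges_inner)
  ultimately show ?thesis
    using x assms L_less R_greater by (intro another_simplexI[of v x x]) (auto simp: xiG_def)
qed

lemma shared_face_Lvw:
  assumes "{L, v, w} \<notin> cyclic_faces2 n"
  shows "\<exists>S'\<in>Xi n E. S' \<noteq> {L, v, w, R} \<and> {L, v, w} \<subseteq> S'"
proof -
  obtain m where m: "v < m" "m \<le> w" "{L, m} \<in> hat_edges n E"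
    and m_min: "\<And>j. v < j \<Longrightarrow> j < m \<Longrightarrow> {L, j} \<notin> hat_edges n E"
    and vm: "{v, m} \<in> hat_edges n E"
    by (rule first_L_neighbour) blast
  show ?thesis
  proof (cases "m = w")
    case True
    have "0 < L"
    proof (rule ccontr)
      assume "\<not> 0 < L"
      then have L: "L = 0" by simp
      then have "{L, v + 1} \<in> hat_edges n E" using v_less_w w_le by (simp add: hat_edges_iff)
      then have "\<not> v + 1 < w" using m_min[of "v + 1"] True by auto
      then have "{L, v, w} = {0, v, v + 1} \<and> 0 < v \<and> v < n + 1" using L v_ge v_less_w w_le by auto
      then have "{L, v, w} \<in> cyclic_faces2 n" unfolding cyclic_faces2_def by blast
      with assms show False ..
    qed
    then show ?thesis using m_min True by (intro face_Lvw_shared_via_Lv) auto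
  next
    case False
    then show ?thesis using m vm by (intro face_Lvw_shared_via_inner[of m]) auto
  qed
qed

lemma face_LwR_shared_via_Lw:
  assumes "0 < L" "\<And>j. w < j \<Longrightarrow> j < R \<Longrightarrow> {L, j} \<notin> hat_edges n E"
  shows "\<exists>S'\<in>Xi n E. S' \<noteq> {L, v, w, R} \<and> {L, w, R} \<subseteq> S'"
proof -
  have Lw: "L < w" using L_less v_less_w by linarith
  then have Lw_edge: "{L, w} \<in> E" using L_hat_edge w_le assms(1) by (simp add: hat_edges_inner)
  have "rG n E L w = R"
    using R_greater L_R_hat_edge assms(2) by (intro rG_eqI[OF graph]) auto
  moreover have "ellG n E L w < L" using ellG_less[OF assms(1) Lw] w_le by simp
  ultimately show ?thesis
    using L_less v_less_w R_greater
    by (intro another_simplexI[OF Lw Lw_edge, of "ellG n E L w"]) (auto simp: xiG_def)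
qed

lemma face_LwR_shared_via_inner:
  assumes "w < y" "y < R" "{w, y} \<in> hat_edges n E" "{L, y} \<in> hat_edges n E"
  shows "\<exists>S'\<in>Xi n E. S' \<noteq> {L, v, w, R} \<and> {L, w, R} \<subseteq> S'"
proof -
  have Lw: "L < w" using L_less v_less_w by linarith
  obtain x where x: "y \<le> x" "x < R" "{w, x} \<in> hat_edges n E"
    and x_max: "\<And>j. x < j \<Longrightarrow> j < R \<Longrightarrow> {w, j} \<notin> hat_edges n E"
    using nat_greatest_below[of y R "\<lambda>j. {w, j} \<in> hat_edges n E"] assms by blast
  have Lx: "{L, x} \<in> hat_edges n E"
  proof (cases "x = y")
    case False
    then show ?thesis
      using hat_edges_crossing[OF persistent Lw _ _ assms(4) x(3)] x assms by auto
  qed (use assms in simp)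
  have "ellG n E w x = L"
    using Lw Lx no_hat_edge_over_w[of _ x] x assms by (intro ellG_eqI) auto
  moreover have "rG n E w x = R"
    using x x_max w_R_hat_edge by (intro rG_eqI[OF graph]) auto
  moreover have "{w, x} \<in> E"
    using x assms v_ge v_less_w R_le hat_edges_inner[of w x n E] by simp
  ultimately show ?thesis
    using x assms L_less v_less_w by (intro another_simplexI[of w x x]) (auto simp: xiG_def)
qed

lemma shared_face_LwR:
  assumes "{L, w, R} \<notin> cyclic_faces2 n"
  shows "\<exists>S'\<in>Xi n E. S' \<noteq> {L, v, w, R} \<and> {L, w, R} \<subseteq> S'"
proof -
  obtain m where m: "w < m" "m \<le> R" "{L, m} \<in> hat_edges n E"
    and m_min: "\<And>j. w < j \<Longrightarrow> j < m \<Longrightarrow> {L, j} \<notin> hat_edges n E"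
    and wm: "m < R \<Longrightarrow> {w, m} \<in> hat_edges n E"
    by (rule first_L_neighbour_above_w) blast
  show ?thesis
  proof (cases "m = R")
    case True
    have "0 < L"
    proof (rule ccontr)
      assume "\<not> 0 < L"
      then have L: "L = 0" by simp
      then have "{L, w + 1} \<in> hat_edges n E" using w_le by (simp add: hat_edges_iff)
      then have "\<not> w + 1 < R" using m_min[of "w + 1"] True by auto
      then have "{L, w, R} = {0, w, w + 1} \<and> 0 < w \<and> w < n + 1"
        using L R_greater v_ge v_less_w w_le by auto
      then have "{L, w, R} \<in> cyclic_faces2 n" unfolding cyclic_faces2_def by blast
      with assms show False ..
    qed
    then show ?thesis using m_min True by (intro face_LwR_shared_via_Lw) auto
  next
    case False
    then show ?thesis using m wm by (intro face_LwR_shared_via_inner[of m]) auto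
  qed
qed

lemma face_LvR_shared_via_vR:
  assumes "R \<le> n" "\<And>j. L < j \<Longrightarrow> j < v \<Longrightarrow> {j, R} \<notin> hat_edges n E"
  shows "\<exists>S'\<in>Xi n E. S' \<noteq> {L, v, w, R} \<and> {L, v, R} \<subseteq> S'"
proof -
  have vR: "v < R" using v_less_w R_greater by linarith
  then have vR_edge: "{v, R} \<in> E" using R_hat_edge v_ge assms(1) by (simp add: hat_edges_inner)
  have "ellG n E v R = L"
    using L_less L_R_hat_edge assms(2) by (intro ellG_eqI) auto
  moreover have "R < rG n E v R" using rG_greater[OF graph vR assms(1)] .
  ultimately show ?thesis
    using L_less v_less_w R_greater
    by (intro another_simplexI[OF vR vR_edge, of "rG n E v R"]) (auto simp: xiG_def)
qed

lemma face_LvR_shared_via_inner: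
  assumes "L < y" "y < v" "{y, v} \<in> hat_edges n E" "{y, R} \<in> hat_edges n E"
  shows "\<exists>S'\<in>Xi n E. S' \<noteq> {L, v, w, R} \<and> {L, v, R} \<subseteq> S'"
proof -
  have vR: "v < R" using v_less_w R_greater by linarith
  obtain x where x: "L < x" "x \<le> y" "{x, v} \<in> hat_edges n E"
    and x_min: "\<And>j. L < j \<Longrightarrow> j < x \<Longrightarrow> {j, v} \<notin> hat_edges n E"
    using nat_least_above[of L y "\<lambda>j. {j, v} \<in> hat_edges n E"] assms by blast
  have xR: "{x, R} \<in> hat_edges n E"
  proof (cases "x = y")
    case False
    then show ?thesis
      using hat_edges_crossing[OF persistent _ _ vR x(3) assms(4)] x assms by auto
  qed (use assms in simp)
  have "ellG n E x v = L"
    using x x_min L_v_hat_edge by (intro ellG_eqI) auto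
  moreover have "rG n E x v = R"
    using vR xR no_hat_edge_over_v[of x] x assms by (intro rG_eqI[OF graph]) auto
  moreover have "{x, v} \<in> E"
    using x assms w_le v_less_w hat_edges_inner[of x v n E] by simp
  ultimately show ?thesis
    using x assms L_less v_less_w R_greater
    by (intro another_simplexI[of x v x]) (auto simp: xiG_def)
qed

lemma shared_face_LvR:
  assumes "{L, v, R} \<notin> cyclic_faces2 n"
  shows "\<exists>S'\<in>Xi n E. S' \<noteq> {L, v, w, R} \<and> {L, v, R} \<subseteq> S'"
proof -
  obtain m where m: "L \<le> m" "m < v" "{m, R} \<in> hat_edges n E"
    and m_max: "\<And>j. m < j \<Longrightarrow> j < v \<Longrightarrow> {j, R} \<notin> hat_edges n E"
    and mv: "L < m \<Longrightarrow> {m, v} \<in> hat_edges n E"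
    by (rule last_R_neighbour_below_v) blast
  show ?thesis
  proof (cases "m = L")
    case True
    have "R \<le> n"
    proof (rule ccontr)
      assume "\<not> R \<le> n"
      then have R: "R = n + 1" using R_le by linarith
      then have "{v - 1, R} \<in> hat_edges n E" using v_less_w w_le by (simp add: hat_edges_iff)
      then have "\<not> L < v - 1" using m_max[of "v - 1"] True by auto
      then have "{L, v, R} = {v - 1, v, n + 1} \<and> 0 < v \<and> v < n + 1"
        using R L_less v_ge v_less_w w_le by auto
      then have "{L, v, R} \<in> cyclic_faces2 n" unfolding cyclic_faces2_def by blast
      with assms show False ..
    qed
    then show ?thesis using m_max True by (intro face_LvR_shared_via_vR) auto
  next
    case False
    then show ?thesis using m mv by (intro face_LvR_shared_via_inner[of m]) auto
  qed
qed

end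

theorem lemma11:
  fixes n :: nat and E :: "nat set set" and S :: "nat set" and a b c :: nat
  assumes "persistent n E"
    and "S \<in> Xi n E"
    and "a < b" and "b < c"
    and "{a, b, c} \<subseteq> S"
    and "{a, b, c} \<notin> cyclic_faces2 n"
  shows "\<exists>S'\<in>Xi n E. S' \<noteq> S \<and> {a, b, c} \<subseteq> S'"
proof -
  obtain v w where vw: "v < w" "{v, w} \<in> E" and S: "S = xiG n E v w"
    using assms(2) unfolding Xi_def by blast
  interpret persistent_edge n E v w
    using assms(1) vw by unfold_locales
  have S_eq: "S = {L, v, w, R}" using S unfolding xiG_def by simp
  have "{a, b, c} = {v, w, R} \<or> {a, b, c} = {L, w, R} \<or> {a, b, c} = {L, v, R} \<or> {a, b, c} = {L, v, w}"
    using sorted_triple_in_quadruple[OF L_less v_less_w R_greater assms(3,4)] assms(5)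
    unfolding S_eq .
  then show ?thesis
    using assms(6) shared_face_vwR shared_face_LwR shared_face_LvR shared_face_Lvw
    unfolding S_eq by (elim disjE; simp only:; blast)
qed

end
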